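(* Let $(\mathcal{A},E,\mathcal{B})$ be an operator-valued $C^*$-probability space and $x_1,x_2,y_1,y_2,w$ self-adjoint elements of $\mathcal{A}$ such that $\mathcal{A}_{\{x_1,x_2\}}\prec\mathcal{A}_w\prec\mathcal{A}_{\{y_1,y_2\}}$ over $\mathcal{B}$. Then for all $n,m\ge0$, $$E\big[(x_1+y_1)^nw(x_2+y_2)^m\big]=\sum_{k=0}^n\sum_{\ell=0}^m\sum_{\substack{q_0,\dots,q_k\ge0\\ q_0+\dots+q_k=n-k}}\sum_{\substack{p_0,\dots,p_\ell\ge0\\ p_0+\dots+p_\ell=m-\ell}}E\Big[E[y_1^{q_0}]x_1E[y_1^{q_1}]\cdots x_1E[y_1^{q_k}]\cdot E[w]\cdot E[y_2^{p_0}]x_2E[y_2^{p_1}]\cdots x_2E[y_2^{p_\ell}]\Big].$$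
   Context: $(\mathcal{A},E,\mathcal{B})$: unital $C^*$-algebra, unital $C^*$-subalgebra $\mathcal{B}$, completely positive conditional expectation $E:\mathcal{A}\to\mathcal{B}$; $y^0$ is interpreted as $1$ (so $E[y^0]=1$). For a set $S\subseteq\mathcal{A}$, $\mathcal{A}_S$ is the (possibly non-unital) $\mathcal{B}$-bimodule subalgebra generated by $S$. Monotone independence $\mathcal{A}_1\prec\mathcal{A}_2\prec\mathcal{A}_3$ over $\mathcal{B}$ means $E[a_1\cdots a_j\cdots a_n]=E[a_1\cdots a_{j-1}E[a_j]a_{j+1}\cdots a_n]$ whenever $a_k\in\mathcal{A}_{i_k}$, $i_k\in\{1,2,3\}$, and $i_{j-1}<i_j>i_{j+1}$ (one inequality dropped at the ends). *)

theory Defs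
  imports "HOL-Analysis.Analysis"
begin

text \<open>A unital complex Banach algebra is modelled as a type of class
real_normed_algebra_1 and banach together with a complex scalar multiplication sc
extending the real one; a unital C*-algebra additionally carries an involution st.\<close>

definition complex_scaling :: "(complex \<Rightarrow> 'a::{real_normed_algebra_1,banach} \<Rightarrow> 'a) \<Rightarrow> bool" where
  "complex_scaling sc \<longleftrightarrow>
     (\<forall>r a. sc (complex_of_real r) a = r *\<^sub>R a) \<and>
     (\<forall>c d a. sc (c + d) a = sc c a + sc d a) \<and>
     (\<forall>c a b. sc c (a + b) = sc c a + sc c b) \<and>
     (\<forall>c d a. sc (c * d) a = sc c (sc d a)) \<and>
     (\<forall>c a b. sc c (a * b) = sc c a * b \<and> sc c (a * b) = a * sc c b) \<and>
     (\<forall>c a. norm (sc c a) = cmod c * norm a)"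

definition unital_cstar_algebra ::
  "(complex \<Rightarrow> 'a::{real_normed_algebra_1,banach} \<Rightarrow> 'a) \<Rightarrow> ('a \<Rightarrow> 'a) \<Rightarrow> bool" where
  "unital_cstar_algebra sc st \<longleftrightarrow>
     complex_scaling sc \<and>
     (\<forall>a b. st (a + b) = st a + st b) \<and>
     (\<forall>c a. st (sc c a) = sc (cnj c) (st a)) \<and>
     (\<forall>a b. st (a * b) = st b * st a) \<and>
     (\<forall>a. st (st a) = a) \<and>
     (\<forall>a. norm (st a * a) = (norm a)\<^sup>2)"

definition unital_cstar_subalgebra ::
  "(complex \<Rightarrow> 'a::{real_normed_algebra_1,banach} \<Rightarrow> 'a) \<Rightarrow> ('a \<Rightarrow> 'a) \<Rightarrow> 'a set \<Rightarrow> bool" where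
  "unital_cstar_subalgebra sc st B \<longleftrightarrow>
     1 \<in> B \<and> closed B \<and>
     (\<forall>a\<in>B. \<forall>b\<in>B. a + b \<in> B \<and> a * b \<in> B) \<and>
     (\<forall>c. \<forall>a\<in>B. sc c a \<in> B) \<and>
     (\<forall>a\<in>B. st a \<in> B)"

definition cstar_positive :: "('a::{real_normed_algebra_1,banach} \<Rightarrow> 'a) \<Rightarrow> 'a \<Rightarrow> bool" where
  "cstar_positive st x \<longleftrightarrow> (\<exists>c. x = st c * c)"

text \<open>Complete positivity of E : A \<rightarrow> B (Lance's formulation): for all n, a_1..a_n in A and
b_1..b_n in B, the element sum_{i,j} b_i* E(a_i* a_j) b_j is positive.\<close>
definition completely_positive ::
  "('a::{real_normed_algebra_1,banach} \<Rightarrow> 'a) \<Rightarrow> 'a set \<Rightarrow> ('a \<Rightarrow> 'a) \<Rightarrow> bool" where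
  "completely_positive st B E \<longleftrightarrow>
     (\<forall>(n::nat) (a::nat \<Rightarrow> 'a) (b::nat \<Rightarrow> 'a). (\<forall>i<n. b i \<in> B) \<longrightarrow>
        cstar_positive st (\<Sum>i<n. \<Sum>j<n. st (b i) * E (st (a i) * a j) * b j))"

definition op_cstar_prob_space ::
  "(complex \<Rightarrow> 'a::{real_normed_algebra_1,banach} \<Rightarrow> 'a) \<Rightarrow> ('a \<Rightarrow> 'a) \<Rightarrow> 'a set \<Rightarrow> ('a \<Rightarrow> 'a) \<Rightarrow> bool" where
  "op_cstar_prob_space sc st B E \<longleftrightarrow>
     unital_cstar_algebra sc st \<and> unital_cstar_subalgebra sc st B \<and>
     (\<forall>a b. E (a + b) = E a + E b) \<and>
     (\<forall>c a. E (sc c a) = sc c (E a)) \<and>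
     (\<forall>a. E a \<in> B) \<and>
     (\<forall>b\<in>B. E b = b) \<and>
     (\<forall>b1\<in>B. \<forall>b2\<in>B. \<forall>a. E (b1 * a * b2) = b1 * E a * b2) \<and>
     completely_positive st B E"

text \<open>The (possibly non-unital) B-bimodule subalgebra generated by S.\<close>
inductive_set bimod_subalg ::
  "(complex \<Rightarrow> 'a::{real_normed_algebra_1,banach} \<Rightarrow> 'a) \<Rightarrow> 'a set \<Rightarrow> 'a set \<Rightarrow> 'a set"
  for sc :: "complex \<Rightarrow> 'a \<Rightarrow> 'a" and B :: "'a set" and S :: "'a set" where
  gen: "s \<in> S \<Longrightarrow> s \<in> bimod_subalg sc B S"
| add: "a \<in> bimod_subalg sc B S \<Longrightarrow> a' \<in> bimod_subalg sc B S \<Longrightarrow> a + a' \<in> bimod_subalg sc B S"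
| mult: "a \<in> bimod_subalg sc B S \<Longrightarrow> a' \<in> bimod_subalg sc B S \<Longrightarrow> a * a' \<in> bimod_subalg sc B S"
| scal: "a \<in> bimod_subalg sc B S \<Longrightarrow> sc c a \<in> bimod_subalg sc B S"
| lmult: "b \<in> B \<Longrightarrow> a \<in> bimod_subalg sc B S \<Longrightarrow> b * a \<in> bimod_subalg sc B S"
| rmult: "b \<in> B \<Longrightarrow> a \<in> bimod_subalg sc B S \<Longrightarrow> a * b \<in> bimod_subalg sc B S"

text \<open>Monotone independence A1 \<prec> A2 \<prec> A3 over B (with respect to E). A word is given by a
list of indices ix (in {1,2,3}) and a list of elements as with as!k in the algebra number ix!k.\<close>
definition monotone_indep3 ::
  "('a::{real_normed_algebra_1,banach} \<Rightarrow> 'a) \<Rightarrow> 'a set \<Rightarrow> 'a set \<Rightarrow> 'a set \<Rightarrow> bool" where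
  "monotone_indep3 E A1 A2 A3 \<longleftrightarrow>
     (\<forall>(ix::nat list) (as::'a list) (j::nat).
        length ix = length as \<and>
        (\<forall>k<length as. ix ! k \<in> {1,2,3} \<and>
            as ! k \<in> (if ix ! k = 1 then A1 else if ix ! k = 2 then A2 else A3)) \<and>
        j < length as \<and>
        (0 < j \<longrightarrow> ix ! (j - 1) < ix ! j) \<and>
        (j + 1 < length as \<longrightarrow> ix ! (j + 1) < ix ! j)
        \<longrightarrow> E (prod_list as) = E (prod_list (as[j := E (as ! j)])))"

definition compositions :: "nat \<Rightarrow> nat \<Rightarrow> nat list set" where
  "compositions len s = {qs. length qs = len \<and> sum_list qs = s}"

fun alt_word :: "('a::monoid_mult \<Rightarrow> 'a) \<Rightarrow> 'a \<Rightarrow> 'a \<Rightarrow> nat list \<Rightarrow> 'a" where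
  "alt_word E x y [] = 1"
| "alt_word E x y [q] = E (y ^ q)"
| "alt_word E x y (q # q' # qs) = E (y ^ q) * x * alt_word E x y (q' # qs)"

end

theory Submission
  imports Defs
begin

text \<open>Expanding at the first occurrence of x gives
(x + y)^n = y^n + \<Sum>j<n. y^j x (x + y)^(n-1-j). Every block y^j lies in the top algebra and
is flanked by letters of lower algebras, so monotone independence replaces it by E[y^j]; by
induction, (x + y)^n may be replaced under E by the sum of the alternating words
E[y^q0] x E[y^q1] \<dots> x E[y^qk], which satisfy the same recursion. After doing this on both
sides of w, the letter w is a peak between elements of the lowest algebra and B, and is
replaced by E[w].\<close>

lemma power_add_split:
  "((x::'a::ring_1) + y) ^ n = y ^ n + (\<Sum>j<n. y ^ j * x * (x + y) ^ (n - 1 - j))"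
proof (induct n)
  case 0
  then show ?case by simp
next
  case (Suc n)
  have "(x + y) ^ Suc n = x * (x + y) ^ n + y * (x + y) ^ n"
    by (simp add: distrib_right)
  also have "y * (x + y) ^ n = y ^ Suc n + (\<Sum>j<n. y ^ Suc j * x * (x + y) ^ (n - 1 - j))"
    using Suc by (simp add: distrib_left sum_distrib_left mult.assoc)
  also have "(\<Sum>j<Suc n. y ^ j * x * (x + y) ^ (Suc n - 1 - j))
      = x * (x + y) ^ n + (\<Sum>j<n. y ^ Suc j * x * (x + y) ^ (n - 1 - j))"
    by (subst sum.lessThan_Suc_shift) simp
  ultimately show ?case
    by (simp add: algebra_simps)
qed

lemma compositions_One: "compositions (Suc 0) s = {[s]}"
  by (auto simp: compositions_def length_Suc_conv)

lemma compositions_Suc: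
  "compositions (Suc k) s = (\<lambda>(q, qs). q # qs) ` (SIGMA q:{..s}. compositions k (s - q))"
  by (auto simp: compositions_def length_Suc_conv image_iff)

lemma finite_compositions: "finite (compositions k s)"
proof (induct k arbitrary: s)
  case 0
  have "compositions 0 s \<subseteq> {[]}"
    by (auto simp: compositions_def)
  then show ?case
    using finite_subset by blast
next
  case (Suc k)
  then show ?case
    by (simp add: compositions_Suc)
qed

lemma sum_compositions_Suc:
  "(\<Sum>qs\<in>compositions (Suc k) s. f qs) = (\<Sum>q\<le>s. \<Sum>qs\<in>compositions k (s - q). f (q # qs))"
proof -
  have "inj_on (\<lambda>(q, qs). q # qs) (SIGMA q:{..s}. compositions k (s - q))"
    by (auto simp: inj_on_def)
  then show ?thesis
    unfolding compositions_Suc by (simp add: sum.reindex sum.Sigma finite_compositions split_def)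
qed

lemma alt_word_Cons:
  "qs \<noteq> [] \<Longrightarrow> alt_word E x y (q # qs) = E (y ^ q) * x * alt_word E x y qs"
  by (cases qs) auto

lemma sum_triangle_swap:
  "(\<Sum>k<n. \<Sum>q\<le>n - Suc k. F k q) = (\<Sum>q<n. \<Sum>k\<le>n - Suc q. F k (q::nat))"
proof -
  have "(\<Sum>k<n. \<Sum>q\<le>n - Suc k. F k q) = (\<Sum>k<n. \<Sum>q\<in>{q. q \<in> {..<n} \<and> k + q < n}. F k q)"
    by (rule sum.cong) (auto intro!: sum.cong)
  also have "\<dots> = (\<Sum>q<n. \<Sum>k\<in>{k. k \<in> {..<n} \<and> k + q < n}. F k q)"
    by (rule sum.swap_restrict) auto
  also have "\<dots> = (\<Sum>q<n. \<Sum>k\<le>n - Suc q. F k q)"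
    by (rule sum.cong) (auto intro!: sum.cong)
  finally show ?thesis .
qed

definition alt_word_sum :: "('a::ring_1 \<Rightarrow> 'a) \<Rightarrow> 'a \<Rightarrow> 'a \<Rightarrow> nat \<Rightarrow> 'a" where
  "alt_word_sum E x y n = (\<Sum>k\<in>{0..n}. \<Sum>qs\<in>compositions (k + 1) (n - k). alt_word E x y qs)"

text \<open>The recursion of power_add_split with y^j replaced by E (y^j), obtained by splitting off
the first entry of each composition.\<close>

lemma alt_word_sum_rec:
  fixes x y :: "'a::ring_1"
  shows "alt_word_sum E x y n = E (y ^ n) + (\<Sum>j<n. E (y ^ j) * x * alt_word_sum E x y (n - 1 - j))"
proof -
  let ?c = "\<lambda>k. compositions (k + 1)"
  have "alt_word_sum E x y n = E (y ^ n) + (\<Sum>k<n. \<Sum>qs\<in>?c (Suc k) (n - Suc k). alt_word E x y qs)"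
    unfolding alt_word_sum_def atLeast0AtMost
    by (subst sum.atMost_shift) (simp add: compositions_One)
  also have "(\<Sum>k<n. \<Sum>qs\<in>?c (Suc k) (n - Suc k). alt_word E x y qs)
      = (\<Sum>k<n. \<Sum>q\<le>n - Suc k. \<Sum>qs\<in>?c k (n - Suc k - q). E (y ^ q) * x * alt_word E x y qs)"
    unfolding add_Suc sum_compositions_Suc
    by (intro sum.cong refl alt_word_Cons) (auto simp: compositions_def)
  also have "\<dots> = (\<Sum>q<n. \<Sum>k\<le>n - Suc q. \<Sum>qs\<in>?c k (n - Suc k - q). E (y ^ q) * x * alt_word E x y qs)"
    by (rule sum_triangle_swap)
  also have "\<dots> = (\<Sum>j<n. E (y ^ j) * x * alt_word_sum E x y (n - 1 - j))"
  proof -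
    have reorder: "\<And>a b. n - Suc a - b = n - 1 - b - a"
      by simp
    show ?thesis
      unfolding alt_word_sum_def sum_distrib_left atLeast0AtMost reorder
      by (intro sum.cong refl) (simp add: mult.assoc)
  qed
  finally show ?thesis .
qed

text \<open>No C*-structure is needed: the algebras A 1 \<prec> A 2 \<prec> A 3 need only be B-bimodule
subalgebras, and E an additive B-bimodule projection onto B.\<close>

locale monotone_triple =
  fixes E :: "'a::{real_normed_algebra_1,banach} \<Rightarrow> 'a" and B :: "'a set" and A :: "nat \<Rightarrow> 'a set"
  assumes E_add: "E (a + b) = E a + E b"
    and E_in: "E a \<in> B"
    and E_id: "b \<in> B \<Longrightarrow> E b = b"
    and E_bimod: "b1 \<in> B \<Longrightarrow> b2 \<in> B \<Longrightarrow> E (b1 * a * b2) = b1 * E a * b2"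
    and one_in_B: "1 \<in> B"
    and A_lmult: "b \<in> B \<Longrightarrow> a \<in> A i \<Longrightarrow> b * a \<in> A i"
    and A_rmult: "b \<in> B \<Longrightarrow> a \<in> A i \<Longrightarrow> a * b \<in> A i"
    and A_mult: "a \<in> A i \<Longrightarrow> a' \<in> A i \<Longrightarrow> a * a' \<in> A i"
    and monotone: "monotone_indep3 E (A 1) (A 2) (A 3)"
begin

text \<open>The level of a letter is the lowest algebra containing it; its value on letters
outside A 1 \<union> A 2 \<union> A 3 is never used.\<close>

definition level :: "'a \<Rightarrow> nat" where
  "level a = (if a \<in> A 1 then 1 else if a \<in> A 2 then 2 else 3)"

definition letters :: "'a list \<Rightarrow> bool" where
  "letters l \<longleftrightarrow> (\<forall>a\<in>set l. a \<in> A 1 \<union> A 2 \<union> A 3)"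

inductive_set word_span :: "('a list \<Rightarrow> bool) \<Rightarrow> 'a set" for P where
  zero: "0 \<in> word_span P"
| word: "letters l \<Longrightarrow> P l \<Longrightarrow> prod_list l \<in> word_span P"
| add: "X \<in> word_span P \<Longrightarrow> Y \<in> word_span P \<Longrightarrow> X + Y \<in> word_span P"

abbreviation "word_algebra \<equiv> word_span (\<lambda>l. True)"
abbreviation "ending_below i \<equiv> word_span (\<lambda>l. l = [] \<or> level (last l) < i)"
abbreviation "starting_below i \<equiv> word_span (\<lambda>l. l = [] \<or> level (hd l) < i)"

lemma E_zero: "E 0 = 0"
  using E_add[of 0 0] by simp

lemma E_sum: "E (sum f S) = (\<Sum>x\<in>S. E (f x))"
  by (induct S rule: infinite_finite_induct) (auto simp: E_zero E_add)

lemma level_le: "a \<in> A k \<Longrightarrow> k \<in> {1,2,3} \<Longrightarrow> level a \<le> k"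
  by (auto simp: level_def)

lemma letters_levels:
  "letters l \<Longrightarrow> list_all2 (\<lambda>k a. k \<in> {1,2,3} \<and>
     a \<in> (if k = 1 then A 1 else if k = 2 then A 2 else A 3)) (map level l) l"
  by (induct l) (auto simp: letters_def level_def)

lemma E_word_peak:
  assumes "letters l1" "letters l2" "a \<in> A i" "i \<in> {1,2,3}"
    and "l1 = [] \<or> level (last l1) < i" "l2 = [] \<or> level (hd l2) < i"
  shows "E (prod_list l1 * a * prod_list l2) = E (prod_list l1 * E a * prod_list l2)"
proof -
  let ?as = "l1 @ a # l2" and ?ix = "map level l1 @ i # map level l2"
  have "list_all2 (\<lambda>k a. k \<in> {1,2,3} \<and> a \<in> (if k = 1 then A 1 else if k = 2 then A 2 else A 3))
      ?ix ?as"
    using letters_levels[OF assms(1)] letters_levels[OF assms(2)] assms(3,4)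
    by (intro list_all2_appendI list_all2_Cons) auto
  moreover have "0 < length l1 \<longrightarrow> ?ix ! (length l1 - 1) < ?ix ! length l1"
    using assms(5) by (auto simp: nth_append last_conv_nth)
  moreover have "length l1 + 1 < length ?as \<longrightarrow> ?ix ! (length l1 + 1) < ?ix ! length l1"
    using assms(6) by (auto simp: nth_append hd_conv_nth)
  ultimately have "E (prod_list ?as) = E (prod_list (?as[length l1 := E (?as ! length l1)]))"
    using monotone[unfolded monotone_indep3_def, rule_format, of ?ix ?as "length l1"]
    by (auto simp: list_all2_conv_all_nth)
  then show ?thesis
    by (simp add: list_update_append mult.assoc)
qed

lemma E_peak:
  assumes "U \<in> ending_below i" "W \<in> starting_below i" "a \<in> A i" "i \<in> {1,2,3}"
  shows "E (U * a * W) = E (U * E a * W)"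
  using assms(1)
proof induct
  case zero
  then show ?case by (simp add: E_zero)
next
  case (word l1)
  from assms(2) show ?case
  proof induct
    case zero
    then show ?case by (simp add: E_zero)
  next
    case (word l2)
    then show ?case
      using \<open>letters l1\<close> \<open>l1 = [] \<or> level (last l1) < i\<close> assms(3,4) by (simp add: E_word_peak)
  next
    case (add X Y)
    then show ?case by (simp add: distrib_left E_add)
  qed
next
  case (add X Y)
  then show ?case by (simp add: distrib_right E_add)
qed

lemma power_mem: "y \<in> A k \<Longrightarrow> 0 < j \<Longrightarrow> y ^ j \<in> A k"
proof (induct j)
  case (Suc j)
  then show ?case
    using A_mult[of y k "y ^ j"] by (cases j) auto
qed simp

lemma E_peak_power:
  assumes "U \<in> ending_below i" "W \<in> starting_below i" "y \<in> A i" "i \<in> {1,2,3}"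
  shows "E (U * y ^ j * W) = E (U * E (y ^ j) * W)"
proof (cases "j = 0")
  case True
  then show ?thesis using E_id one_in_B by simp
next
  case False
  then show ?thesis using E_peak[OF assms(1,2) power_mem[OF assms(3)] assms(4)] by simp
qed

lemma word_span_sum: "(\<And>x. x \<in> S \<Longrightarrow> f x \<in> word_span P) \<Longrightarrow> sum f S \<in> word_span P"
  by (induct S rule: infinite_finite_induct) (simp_all add: word_span.zero word_span.add)

lemma word_span_subset_algebra: "X \<in> word_span P \<Longrightarrow> X \<in> word_algebra"
  by (induct rule: word_span.induct) (simp_all add: word_span.intros)

lemma one_in_word_span: "1 \<in> word_span (\<lambda>l. l = [] \<or> Q l)"
  using word_span.word[of "[]" "\<lambda>l. l = [] \<or> Q l"] by (simp add: letters_def)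

lemma letter_in_word_algebra: "a \<in> A k \<Longrightarrow> k \<in> {1,2,3} \<Longrightarrow> a \<in> word_algebra"
  using word_span.word[of "[a]" "\<lambda>l. True"] by (auto simp: letters_def)

lemma word_algebra_mult: "X \<in> word_algebra \<Longrightarrow> Y \<in> word_algebra \<Longrightarrow> X * Y \<in> word_algebra"
proof (induct X rule: word_span.induct)
  case zero
  then show ?case by (simp add: word_span.zero)
next
  case (word l1)
  from word(3) show ?case
  proof (induct Y rule: word_span.induct)
    case zero
    then show ?case by (simp add: word_span.zero)
  next
    case (word l2)
    have "prod_list (l1 @ l2) \<in> word_algebra"
      using word \<open>letters l1\<close> by (intro word_span.word) (auto simp: letters_def)
    then show ?case by simp
  next
    case (add X Y)
    then show ?case by (simp add: distrib_left word_span.add)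
  qed
next
  case (add X Y)
  then show ?case by (simp add: distrib_right word_span.add)
qed

lemma word_algebra_power: "X \<in> word_algebra \<Longrightarrow> X ^ j \<in> word_algebra"
  by (induct j) (simp_all add: word_algebra_mult one_in_word_span[where Q="\<lambda>_. True", simplified])

lemma mult_letter_ending_below:
  "X \<in> word_span P \<Longrightarrow> a \<in> A k \<Longrightarrow> k \<in> {1,2,3} \<Longrightarrow> k < i \<Longrightarrow> X * a \<in> ending_below i"
proof (induct X rule: word_span.induct)
  case zero
  then show ?case by (simp add: word_span.zero)
next
  case (word l)
  have "prod_list (l @ [a]) \<in> ending_below i"
    using word level_le[of a k] by (intro word_span.word) (auto simp: letters_def)
  then show ?case by simp
next
  case (add X Y)
  then show ?case by (simp add: distrib_right word_span.add)
qed

lemma letter_mult_starting_below: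
  "X \<in> word_span P \<Longrightarrow> a \<in> A k \<Longrightarrow> k \<in> {1,2,3} \<Longrightarrow> k < i \<Longrightarrow> a * X \<in> starting_below i"
proof (induct X rule: word_span.induct)
  case zero
  then show ?case by (simp add: word_span.zero)
next
  case (word l)
  have "prod_list (a # l) \<in> starting_below i"
    using word level_le[of a k] by (intro word_span.word) (auto simp: letters_def)
  then show ?case by simp
next
  case (add X Y)
  then show ?case by (simp add: distrib_left word_span.add)
qed

lemma letter_mult_ending_below:
  "X \<in> ending_below i \<Longrightarrow> a \<in> A k \<Longrightarrow> k \<in> {1,2,3} \<Longrightarrow> k < i \<Longrightarrow> a * X \<in> ending_below i"
proof (induct X rule: word_span.induct)
  case zero
  then show ?case by (simp add: word_span.zero)
next
  case (word l)
  have "prod_list (a # l) \<in> ending_below i"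
    using word level_le[of a k] by (intro word_span.word) (auto simp: letters_def)
  then show ?case by simp
next
  case (add X Y)
  then show ?case by (simp add: distrib_left word_span.add)
qed

text \<open>Strong induction on n for all left contexts U: past the first x the left context grows
by the letter E (y^j) * x \<in> A 1.\<close>

lemma E_power_eq_alt_word_sum:
  assumes x: "x \<in> A 1" and y: "y \<in> A 3" and Z: "Z \<in> starting_below 3"
  shows "U \<in> ending_below 3 \<Longrightarrow> E (U * (x + y) ^ n * Z) = E (U * alt_word_sum E x y n * Z)"
proof (induction n arbitrary: U rule: less_induct)
  case (less n)
  have "x + y \<in> word_algebra"
    using letter_in_word_algebra[OF x] letter_in_word_algebra[OF y] word_span.add by simp
  then have Zk_alg: "(x + y) ^ k * Z \<in> word_algebra" for k
    using word_algebra_power word_algebra_mult word_span_subset_algebra[OF Z] by blast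
  have Zk: "x * ((x + y) ^ k * Z) \<in> starting_below 3" for k
    using letter_mult_starting_below[OF Zk_alg x] by simp
  have first_x: "E (U * (y ^ j * x * (x + y) ^ (n - 1 - j)) * Z)
      = E (U * (E (y ^ j) * x * alt_word_sum E x y (n - 1 - j)) * Z)" if "j < n" for j
  proof -
    have U': "U * (E (y ^ j) * x) \<in> ending_below 3"
      by (rule mult_letter_ending_below[OF less.prems A_lmult[OF E_in x]]) simp_all
    have "E (U * (y ^ j * x * (x + y) ^ (n - 1 - j)) * Z)
        = E (U * E (y ^ j) * (x * ((x + y) ^ (n - 1 - j) * Z)))"
      using E_peak_power[OF less.prems Zk y] by (simp add: mult.assoc)
    also have "\<dots> = E (U * (E (y ^ j) * x) * (x + y) ^ (n - 1 - j) * Z)"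
      by (simp add: mult.assoc)
    also have "\<dots> = E (U * (E (y ^ j) * x) * alt_word_sum E x y (n - 1 - j) * Z)"
      using less.IH[OF _ U'] that by simp
    finally show ?thesis
      by (simp add: mult.assoc)
  qed
  have "E (U * (x + y) ^ n * Z) = E (U * y ^ n * Z) + (\<Sum>j<n. E (U * (y ^ j * x * (x + y) ^ (n - 1 - j)) * Z))"
    by (subst power_add_split) (simp add: distrib_left distrib_right sum_distrib_left sum_distrib_right E_add E_sum)
  also have "\<dots> = E (U * E (y ^ n) * Z) + (\<Sum>j<n. E (U * (E (y ^ j) * x * alt_word_sum E x y (n - 1 - j)) * Z))"
    using E_peak_power[OF less.prems Z y] first_x by simp
  also have "\<dots> = E (U * alt_word_sum E x y n * Z)"
    by (simp only: alt_word_sum_rec[of E x y n])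
      (simp add: distrib_left distrib_right sum_distrib_left sum_distrib_right E_add E_sum)
  finally show ?case .
qed

lemma alt_word_ending_factor:
  assumes x: "x \<in> A 1"
  shows "qs \<noteq> [] \<Longrightarrow> \<exists>U b. U \<in> ending_below 2 \<and> b \<in> B \<and> alt_word E x y qs = U * b"
proof (induct qs rule: list_nonempty_induct)
  case (single q)
  show ?case using one_in_word_span E_in by fastforce
next
  case (cons q qs)
  then obtain U b where U: "U \<in> ending_below 2" "b \<in> B" "alt_word E x y qs = U * b"
    by blast
  have "E (y ^ q) * x * U \<in> ending_below 2"
    using letter_mult_ending_below[OF U(1) A_lmult[OF E_in x]] by simp
  moreover have "alt_word E x y (q # qs) = (E (y ^ q) * x * U) * b"
    using U(3) cons.hyps by (simp add: alt_word_Cons mult.assoc)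
  ultimately show ?case
    using U(2) by blast
qed

lemma alt_word_starting_factor:
  assumes x: "x \<in> A 1"
  shows "qs \<noteq> [] \<Longrightarrow> \<exists>b W. b \<in> B \<and> W \<in> starting_below 2 \<and> alt_word E x y qs = b * W"
proof (induct qs rule: list_nonempty_induct)
  case (single q)
  show ?case using one_in_word_span E_in by fastforce
next
  case (cons q qs)
  then obtain b W where W: "b \<in> B" "W \<in> starting_below 2" "alt_word E x y qs = b * W"
    by blast
  have "x * b * W \<in> starting_below 2"
    using letter_mult_starting_below[OF W(2) A_rmult[OF W(1) x]] by simp
  moreover have "alt_word E x y (q # qs) = E (y ^ q) * (x * b * W)"
    using W(3) cons.hyps by (simp add: alt_word_Cons mult.assoc)
  ultimately show ?case
    using E_in by blast
qed

lemma E_alt_word_peak: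
  assumes x1: "x1 \<in> A 1" and x2: "x2 \<in> A 1" and w: "w \<in> A 2"
    and "qs \<noteq> []" "ps \<noteq> []"
  shows "E (alt_word E x1 y1 qs * w * alt_word E x2 y2 ps)
       = E (alt_word E x1 y1 qs * E w * alt_word E x2 y2 ps)"
proof -
  obtain U b where U: "U \<in> ending_below 2" "b \<in> B" "alt_word E x1 y1 qs = U * b"
    using alt_word_ending_factor[OF x1 \<open>qs \<noteq> []\<close>] by blast
  obtain b' W where W: "b' \<in> B" "W \<in> starting_below 2" "alt_word E x2 y2 ps = b' * W"
    using alt_word_starting_factor[OF x2 \<open>ps \<noteq> []\<close>] by blast
  have "E (U * (b * w * b') * W) = E (U * E (b * w * b') * W)"
    using E_peak[OF U(1) W(2) A_rmult[OF W(1) A_lmult[OF U(2) w]]] by simp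
  then show ?thesis
    using U(3) W(3) E_bimod[OF U(2) W(1), of w] by (simp add: mult.assoc)
qed

lemma alt_word_sum_mult_ending_below:
  assumes x: "x \<in> A 1" and w: "w \<in> A 2"
  shows "alt_word_sum E x y n * w \<in> ending_below 3"
proof -
  have alt_w: "alt_word E x y qs * w \<in> ending_below 3" if ne: "qs \<noteq> []" for qs
  proof -
    obtain U b where U: "U \<in> ending_below 2" "b \<in> B" "alt_word E x y qs = U * b"
      using alt_word_ending_factor[OF x ne] by blast
    have "U * (b * w) \<in> ending_below 3"
      using mult_letter_ending_below[OF U(1) A_lmult[OF U(2) w]] by simp
    then show ?thesis
      by (simp add: U(3) mult.assoc)
  qed
  show ?thesis
    unfolding alt_word_sum_def sum_distrib_right
    by (intro word_span_sum alt_w) (auto simp: compositions_def)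
qed

lemma E_mixed_moment:
  assumes x1: "x1 \<in> A 1" and x2: "x2 \<in> A 1" and w: "w \<in> A 2"
    and y1: "y1 \<in> A 3" and y2: "y2 \<in> A 3"
  shows "E ((x1 + y1) ^ n * w * (x2 + y2) ^ m) =
    (\<Sum>k\<in>{0..n}. \<Sum>l\<in>{0..m}. \<Sum>qs\<in>compositions (k + 1) (n - k). \<Sum>ps\<in>compositions (l + 1) (m - l).
       E (alt_word E x1 y1 qs * E w * alt_word E x2 y2 ps))"
proof -
  let ?S1 = "alt_word_sum E x1 y1 n" and ?S2 = "alt_word_sum E x2 y2 m"
  have "(x2 + y2) ^ m \<in> word_algebra"
    using letter_in_word_algebra[OF x2] letter_in_word_algebra[OF y2]
    by (simp add: word_span.add word_algebra_power)
  then have right: "w * (x2 + y2) ^ m \<in> starting_below 3"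
    using letter_mult_starting_below w by simp
  have "E (1 * (x1 + y1) ^ n * (w * (x2 + y2) ^ m)) = E (1 * ?S1 * (w * (x2 + y2) ^ m))"
    by (rule E_power_eq_alt_word_sum[OF x1 y1 right one_in_word_span])
  then have "E ((x1 + y1) ^ n * w * (x2 + y2) ^ m) = E (?S1 * w * (x2 + y2) ^ m)"
    by (simp add: mult.assoc)
  also have "\<dots> = E (?S1 * w * ?S2)"
    using E_power_eq_alt_word_sum[OF x2 y2 one_in_word_span alt_word_sum_mult_ending_below[OF x1 w]]
    by simp
  also have "\<dots> = (\<Sum>k\<in>{0..n}. \<Sum>qs\<in>compositions (k + 1) (n - k). \<Sum>l\<in>{0..m}.
      \<Sum>ps\<in>compositions (l + 1) (m - l). E (alt_word E x1 y1 qs * w * alt_word E x2 y2 ps))"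
    by (simp only: alt_word_sum_def sum_distrib_right) (simp only: sum_distrib_left E_sum)
  also have "\<dots> = (\<Sum>k\<in>{0..n}. \<Sum>qs\<in>compositions (k + 1) (n - k). \<Sum>l\<in>{0..m}.
      \<Sum>ps\<in>compositions (l + 1) (m - l). E (alt_word E x1 y1 qs * E w * alt_word E x2 y2 ps))"
    by (intro sum.cong refl E_alt_word_peak[OF x1 x2 w]) (auto simp: compositions_def)
  also have "\<dots> = (\<Sum>k\<in>{0..n}. \<Sum>l\<in>{0..m}. \<Sum>qs\<in>compositions (k + 1) (n - k).
      \<Sum>ps\<in>compositions (l + 1) (m - l). E (alt_word E x1 y1 qs * E w * alt_word E x2 y2 ps))"
    by (intro sum.cong refl sum.swap)
  finally show ?thesis .
qed

end

theorem lemma3p3: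
  fixes sc :: "complex \<Rightarrow> 'a::{real_normed_algebra_1,banach} \<Rightarrow> 'a"
    and st :: "'a \<Rightarrow> 'a" and B :: "'a set" and E :: "'a \<Rightarrow> 'a"
    and x1 x2 y1 y2 w :: 'a and n m :: nat
  assumes "op_cstar_prob_space sc st B E"
    and "st x1 = x1" and "st x2 = x2" and "st y1 = y1" and "st y2 = y2" and "st w = w"
    and "monotone_indep3 E (bimod_subalg sc B {x1, x2}) (bimod_subalg sc B {w})
           (bimod_subalg sc B {y1, y2})"
  shows "E ((x1 + y1) ^ n * w * (x2 + y2) ^ m) =
    (\<Sum>k\<in>{0..n}. \<Sum>l\<in>{0..m}. \<Sum>qs\<in>compositions (k + 1) (n - k). \<Sum>ps\<in>compositions (l + 1) (m - l).
       E (alt_word E x1 y1 qs * E w * alt_word E x2 y2 ps))"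
proof -
  define A where "A i = (if i = 1 then bimod_subalg sc B {x1, x2}
    else if i = 2 then bimod_subalg sc B {w} else bimod_subalg sc B {y1, y2})" for i :: nat
  interpret monotone_triple E B A
    using assms(1,7) unfolding op_cstar_prob_space_def unital_cstar_subalgebra_def A_def
    unfolding monotone_triple_def by (auto intro: bimod_subalg.intros)
  show ?thesis
    by (rule E_mixed_moment) (auto simp: A_def intro: bimod_subalg.gen)
qed

end
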